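(* Let $G$ and $H$ be finite abelian groups, written additively, of the same even order $k$, and let $f:G\to H$ be semi-planar. Suppose $S(G,H;f)$ splits into two substructures $S_1$ and $S_2$ with $\mathcal{L}(0,0)\in S_1$. Then there is a subgroup $B$ of $H$ of index $2$ such that either (i) for all $a\in G$, $b\in H$: $\mathcal{L}(a,b)\in S_1$ if and only if $b\in B$; or (ii) there is a subgroup $A$ of $G$ of index $2$ such that, for any $g\in G\setminus A$ and $h\in H\setminus B$, and all $a\in G$, $b\in H$: $\mathcal{L}(a,b)\in S_1$ if and only if ($a\in A$ and $b\in B$) or ($a\in A+g$ and $b\in B+h$).
   Context: A function $f:G\to H$ is semi-planar if for every non-identity $a\in G$ and every $y\in H$, the equation $f(x+a)-f(x)=y$ has either $0$ or $2$ solutions $x\in G$. The incidence structure $S(G,H;f)$ has points $(x,y)\in G\times H$ and lines $\mathcal{L}(a,b)$ for $(a,b)\in G\times H$, with $(x,y)$ incident with $\mathcal{L}(a,b)$ iff $y=f(x-a)+b$. Its incidence graph is the bipartite graph on points and lines with an edge for each incident pair. $S(G,H;f)$ splits into two substructures $S_1,S_2$ if its incidence graph has exactly two connected components; $S_1,S_2$ are the incidence structures formed by the points and lines of the two components, and $\mathcal{L}(a,b)\in S_i$ means the line lies in component $S_i$. *)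

theory Defs
  imports "HOL-Library.Cardinality"
begin

definition subgroup_add :: "'a::ab_group_add set \<Rightarrow> bool" where
  "subgroup_add B \<longleftrightarrow> 0 \<in> B \<and> (\<forall>x\<in>B. \<forall>y\<in>B. x + y \<in> B) \<and> (\<forall>x\<in>B. - x \<in> B)"

definition index_two :: "'a::{ab_group_add,finite} set \<Rightarrow> bool" where
  "index_two B \<longleftrightarrow> card (UNIV :: 'a set) = 2 * card B"

definition semi_planar :: "('g::{ab_group_add,finite} \<Rightarrow> 'h::ab_group_add) \<Rightarrow> bool" where
  "semi_planar f \<longleftrightarrow>
     (\<forall>a. a \<noteq> 0 \<longrightarrow> (\<forall>y. card {x. f (x + a) - f x = y} = 0 \<or> card {x. f (x + a) - f x = y} = 2))"

definition incident :: "('g::ab_group_add \<Rightarrow> 'h::ab_group_add) \<Rightarrow> 'g \<times> 'h \<Rightarrow> 'g \<times> 'h \<Rightarrow> bool" where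
  "incident f p l \<longleftrightarrow> snd p = f (fst p - fst l) + snd l"

text \<open>Edges of the bipartite incidence graph; vertices are Inl point / Inr line.\<close>
definition inc_edges :: "('g::ab_group_add \<Rightarrow> 'h::ab_group_add) \<Rightarrow> (('g \<times> 'h) + ('g \<times> 'h)) rel" where
  "inc_edges f = {(Inl p, Inr l) | p l. incident f p l} \<union> {(Inr l, Inl p) | p l. incident f p l}"

definition connected_rel :: "('g::ab_group_add \<Rightarrow> 'h::ab_group_add) \<Rightarrow> (('g \<times> 'h) + ('g \<times> 'h)) rel" where
  "connected_rel f = (inc_edges f)\<^sup>*"

text \<open>S(G,H;f) splits into two substructures: exactly two connected components.\<close>
definition splits_in_two :: "('g::ab_group_add \<Rightarrow> 'h::ab_group_add) \<Rightarrow> bool" where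
  "splits_in_two f \<longleftrightarrow> card (UNIV // connected_rel f) = 2"

definition line_in_S1 :: "('g::ab_group_add \<Rightarrow> 'h::ab_group_add) \<Rightarrow> 'g \<Rightarrow> 'h \<Rightarrow> bool" where
  "line_in_S1 f a b \<longleftrightarrow> (Inr (0, 0), Inr (a, b)) \<in> connected_rel f"

end

theory Submission
  imports Defs "HOL-Library.Product_Plus"
begin

text \<open>The translations of \<open>G \<times> H\<close> act on points and lines and preserve incidence, so they
permute the connected components. Hence the lines in the component of \<open>\<L>(0,0)\<close> form a subgroup
\<open>K\<close> of \<open>G \<times> H\<close>, and two lines are connected iff their difference lies in \<open>K\<close>. Every point lies
on a line, so two components means that \<open>K\<close> has index two; and all lines through the point
\<open>(0,0)\<close> are connected, so \<open>K\<close> projects onto \<open>G\<close>. The two alternatives are the two shapes of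
such a subgroup: with \<open>A \<times> 0\<close> and \<open>0 \<times> B\<close> its intersections with the axes, either \<open>A = G\<close>,
or \<open>A\<close> and \<open>B\<close> both have index two and \<open>K = A \<times> B \<union> (A + g) \<times> (B + h)\<close>.\<close>

lemma subgroup_add_diff:
  assumes "subgroup_add S" "x \<in> S" "y \<in> S"
  shows "x - y \<in> S"
  using assms unfolding subgroup_add_def by (metis diff_conv_add_uminus)

lemma subgroup_add_vimage:
  fixes h :: "'a::ab_group_add \<Rightarrow> 'b::ab_group_add"
  assumes "subgroup_add S" and additive: "\<And>x y. h (x + y) = h x + h y"
  shows "subgroup_add (h -` S)"
proof -
  have "h 0 = 0" using additive[of 0 0] by simp
  moreover have "h (- x) = - h x" for x
    using additive[of x "- x"] \<open>h 0 = 0\<close> by (simp add: eq_neg_iff_add_eq_0 add.commute)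
  ultimately show ?thesis using assms unfolding subgroup_add_def by simp
qed

lemma mem_image_add_right_iff:
  fixes g :: "'a::ab_group_add"
  shows "x \<in> (\<lambda>s. s + g) ` S \<longleftrightarrow> x - g \<in> S"
proof
  assume "x - g \<in> S"
  then show "x \<in> (\<lambda>s. s + g) ` S" by (rule rev_image_eqI) simp
qed auto

definition two_cosets :: "'a::ab_group_add set \<Rightarrow> bool" where
  "two_cosets S \<longleftrightarrow> subgroup_add S \<and> (\<exists>x. x \<notin> S) \<and> (\<forall>x y. x \<notin> S \<longrightarrow> y \<notin> S \<longrightarrow> x - y \<in> S)"

lemma index_two_if_two_cosets:
  fixes S :: "'a::{ab_group_add,finite} set"
  assumes "two_cosets S"
  shows "index_two S"
proof -
  obtain g where "g \<notin> S" and sub: "subgroup_add S" and diff: "\<And>x y. x \<notin> S \<Longrightarrow> y \<notin> S \<Longrightarrow> x - y \<in> S"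
    using assms unfolding two_cosets_def by blast
  have "x \<in> S \<union> (\<lambda>s. s + g) ` S" for x
    using diff[of x g] \<open>g \<notin> S\<close> by (auto simp: mem_image_add_right_iff)
  then have cover: "UNIV = S \<union> (\<lambda>s. s + g) ` S" by blast
  have disjoint: "S \<inter> (\<lambda>s. s + g) ` S = {}"
    using \<open>g \<notin> S\<close> subgroup_add_diff[OF sub] by (fastforce simp: mem_image_add_right_iff)
  have "card (UNIV :: 'a set) = card S + card ((\<lambda>s. s + g) ` S)"
    unfolding cover using disjoint by (simp add: card_Un_disjoint)
  also have "card ((\<lambda>s. s + g) ` S) = card S"
    by (rule card_image) (simp add: inj_on_def)
  finally show ?thesis
    unfolding index_two_def by simp
qed

lemma two_cosets_vimage:
  fixes h :: "'a::ab_group_add \<Rightarrow> 'b::ab_group_add"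
  assumes "two_cosets S" and additive: "\<And>x y. h (x + y) = h x + h y" and "h x \<notin> S"
  shows "two_cosets (h -` S)"
proof -
  have "h (x - y) = h x - h y" for x y
    using additive[of "x - y" y] by (simp add: eq_diff_eq)
  then show ?thesis
    using assms subgroup_add_vimage[of S h] unfolding two_cosets_def by auto
qed

lemma two_cosets_product_cases:
  fixes K :: "('g::{ab_group_add,finite} \<times> 'h::{ab_group_add,finite}) set"
  assumes K: "two_cosets K" and onto: "\<And>a. \<exists>b. (a, b) \<in> K"
  shows "\<exists>B::'h set. subgroup_add B \<and> index_two B \<and>
     ((\<forall>a b. (a, b) \<in> K \<longleftrightarrow> b \<in> B) \<or>
      (\<exists>A::'g set. subgroup_add A \<and> index_two A \<and>
         (\<forall>g h. g \<notin> A \<longrightarrow> h \<notin> B \<longrightarrow>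
            (\<forall>a b. (a, b) \<in> K \<longleftrightarrow>
               ((a \<in> A \<and> b \<in> B) \<or> (a \<in> (\<lambda>x. x + g) ` A \<and> b \<in> (\<lambda>y. y + h) ` B))))))"
proof -
  have sub: "subgroup_add K" and diff_out: "\<And>p q. p \<notin> K \<Longrightarrow> q \<notin> K \<Longrightarrow> p - q \<in> K"
    using K unfolding two_cosets_def by auto
  have add_in: "p + q \<in> K" if "p \<in> K" "q \<in> K" for p q
    using sub that unfolding subgroup_add_def by blast
  define A where "A = (\<lambda>a. (a, 0::'h)) -` K"
  define B where "B = Pair (0::'g) -` K"
  have in_K_iff: "(a, b) \<in> K \<longleftrightarrow> b \<in> B" if "a \<in> A" for a b
    using that add_in[of "(a, 0)" "(0, b)"] subgroup_add_diff[OF sub, of "(a, b)" "(a, 0)"]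
    unfolding A_def B_def by auto
  obtain a0 b0 where "(a0, b0) \<notin> K" using K unfolding two_cosets_def by auto
  moreover obtain b where "(a0, b) \<in> K" using onto by blast
  ultimately have "(0, b0 - b) \<notin> K" using add_in[of "(0, b0 - b)" "(a0, b)"] by auto
  then have "two_cosets B" unfolding B_def by (intro two_cosets_vimage[OF K]) simp_all
  then have B: "subgroup_add B" "index_two B" "\<And>x y. x \<notin> B \<Longrightarrow> y \<notin> B \<Longrightarrow> x - y \<in> B"
    using index_two_if_two_cosets unfolding two_cosets_def by blast+
  show ?thesis
  proof (cases "A = UNIV")
    case True
    then have "\<forall>a b. (a, b) \<in> K \<longleftrightarrow> b \<in> B" using in_K_iff by simp
    with B(1,2) show ?thesis by blast
  next
    case False
    then obtain g0 where "g0 \<notin> A" by blast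
    then have "two_cosets A" unfolding A_def by (intro two_cosets_vimage[OF K]) simp_all
    then have A: "subgroup_add A" "index_two A" "\<And>x y. x \<notin> A \<Longrightarrow> y \<notin> A \<Longrightarrow> x - y \<in> A"
      using index_two_if_two_cosets unfolding two_cosets_def by blast+
    have "(a, b) \<in> K \<longleftrightarrow> (a \<in> A \<and> b \<in> B) \<or> (a \<in> (\<lambda>x. x + g) ` A \<and> b \<in> (\<lambda>y. y + h) ` B)"
      if "g \<notin> A" "h \<notin> B" for g h a b
    proof -
      have "- h \<notin> B" using \<open>h \<notin> B\<close> B(1) unfolding subgroup_add_def by force
      then have "(g, h) \<in> K"
        using diff_out[of "(g, 0)" "(0, - h)"] \<open>g \<notin> A\<close> unfolding A_def B_def by simp
      show ?thesis
      proof (cases "a \<in> A")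
        case True
        then show ?thesis
          using in_K_iff \<open>g \<notin> A\<close> subgroup_add_diff[OF A(1), of a "a - g"]
          by (auto simp: mem_image_add_right_iff)
      next
        case False
        then have "a - g \<in> A" using A(3) \<open>g \<notin> A\<close> by blast
        have "(a, b) \<in> K \<longleftrightarrow> (a - g, b - h) \<in> K"
          using add_in[of "(a - g, b - h)" "(g, h)"] subgroup_add_diff[OF sub, of "(a, b)" "(g, h)"]
            \<open>(g, h) \<in> K\<close> by auto
        with False \<open>a - g \<in> A\<close> show ?thesis
          using in_K_iff by (simp add: mem_image_add_right_iff)
      qed
    qed
    with A B show ?thesis by blast
  qed
qed

definition translate_vertex ::
    "'g::ab_group_add \<times> 'h::ab_group_add \<Rightarrow> ('g \<times> 'h) + ('g \<times> 'h) \<Rightarrow> ('g \<times> 'h) + ('g \<times> 'h)" where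
  "translate_vertex t = map_sum (\<lambda>p. p + t) (\<lambda>l. l + t)"

lemma incident_translate: "incident f (p + t) (l + t) \<longleftrightarrow> incident f p l"
  by (simp add: incident_def algebra_simps)

lemma inc_edgesI:
  assumes "incident f p l"
  shows "(Inl p, Inr l) \<in> inc_edges f" and "(Inr l, Inl p) \<in> inc_edges f"
  using assms unfolding inc_edges_def by blast+

lemma inc_edges_translate:
  assumes "(u, v) \<in> inc_edges f"
  shows "(translate_vertex t u, translate_vertex t v) \<in> inc_edges f"
proof -
  consider p l where "u = Inl p" "v = Inr l" "incident f p l"
    | p l where "u = Inr l" "v = Inl p" "incident f p l"
    using assms unfolding inc_edges_def by blast
  then show ?thesis
    by cases (simp_all add: translate_vertex_def incident_translate inc_edgesI)
qed

lemma connected_rel_translate: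
  assumes "(u, v) \<in> connected_rel f"
  shows "(translate_vertex t u, translate_vertex t v) \<in> connected_rel f"
  using assms unfolding connected_rel_def
proof (induction rule: rtrancl_induct)
  case (step v w)
  from step.IH inc_edges_translate[OF step.hyps(2)] show ?case by (rule rtrancl_into_rtrancl)
qed simp

lemma lines_connected_translate:
  "(Inr l, Inr m) \<in> connected_rel f \<Longrightarrow> (Inr (l + t), Inr (m + t)) \<in> connected_rel f"
  using connected_rel_translate[of "Inr l" "Inr m" f t] by (simp add: translate_vertex_def)

lemma equiv_connected_rel: "equiv UNIV (connected_rel f)"
proof -
  have "sym (inc_edges f)" unfolding inc_edges_def sym_def by blast
  then show ?thesis
    unfolding connected_rel_def by (intro equivI refl_rtrancl sym_rtrancl trans_rtrancl) simp_all
qed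

lemma connected_rel_sym: "(u, v) \<in> connected_rel f \<Longrightarrow> (v, u) \<in> connected_rel f"
  using equiv_connected_rel unfolding equiv_def by (blast dest: symD)

lemma connected_rel_trans:
  "(u, v) \<in> connected_rel f \<Longrightarrow> (v, w) \<in> connected_rel f \<Longrightarrow> (u, w) \<in> connected_rel f"
  unfolding connected_rel_def by (rule rtrancl_trans)

lemma point_connected_line: "(Inl (x, y), Inr (a, y - f (x - a))) \<in> connected_rel f"
  unfolding connected_rel_def by (rule r_into_rtrancl, rule inc_edgesI) (simp add: incident_def)

lemma vertex_connected_line: "\<exists>l. (u, Inr l) \<in> connected_rel f"
proof (cases u)
  case (Inl p)
  then show ?thesis using point_connected_line[of "fst p" "snd p"] by (metis prod.collapse)
next
  case (Inr l)
  then show ?thesis unfolding connected_rel_def by blast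
qed

definition base_component_lines :: "('g::ab_group_add \<Rightarrow> 'h::ab_group_add) \<Rightarrow> ('g \<times> 'h) set" where
  "base_component_lines f = {l. (Inr 0, Inr l) \<in> connected_rel f}"

lemma line_in_S1_iff: "line_in_S1 f a b \<longleftrightarrow> (a, b) \<in> base_component_lines f"
  by (simp add: line_in_S1_def base_component_lines_def zero_prod_def)

lemma lines_connected_iff:
  "(Inr l, Inr m) \<in> connected_rel f \<longleftrightarrow> m - l \<in> base_component_lines f"
proof
  assume "(Inr l, Inr m) \<in> connected_rel f"
  from lines_connected_translate[OF this, of "- l"]
  show "m - l \<in> base_component_lines f" by (simp add: base_component_lines_def)
next
  assume "m - l \<in> base_component_lines f"
  then have "(Inr 0, Inr (m - l)) \<in> connected_rel f" by (simp add: base_component_lines_def)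
  from lines_connected_translate[OF this, of l] show "(Inr l, Inr m) \<in> connected_rel f" by simp
qed

lemma subgroup_base_component_lines: "subgroup_add (base_component_lines f)"
proof -
  let ?K = "base_component_lines f" and ?R = "connected_rel f"
  have "(Inr 0, Inr 0) \<in> ?R" unfolding connected_rel_def by simp
  then have "0 \<in> ?K" by (simp add: base_component_lines_def)
  moreover have "l + m \<in> ?K" if "l \<in> ?K" "m \<in> ?K" for l m
  proof -
    have "(Inr 0, Inr l) \<in> ?R" using \<open>l \<in> ?K\<close> by (simp add: base_component_lines_def)
    moreover have "(Inr l, Inr (l + m)) \<in> ?R" using \<open>m \<in> ?K\<close> by (simp add: lines_connected_iff)
    ultimately have "(Inr 0, Inr (l + m)) \<in> ?R" by (rule connected_rel_trans)
    then show ?thesis by (simp add: base_component_lines_def)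
  qed
  moreover have "- l \<in> ?K" if "l \<in> ?K" for l
  proof -
    have "(Inr (- l), Inr 0) \<in> ?R" using that by (simp add: lines_connected_iff)
    then have "(Inr 0, Inr (- l)) \<in> ?R" by (rule connected_rel_sym)
    then show ?thesis by (simp add: base_component_lines_def)
  qed
  ultimately show ?thesis unfolding subgroup_add_def by blast
qed

lemma base_component_lines_onto: "\<exists>b. (a, b) \<in> base_component_lines f"
proof -
  have "(Inl (0, 0), Inr (0, - f 0)) \<in> connected_rel f"
    and "(Inl (0, 0), Inr (a, - f (- a))) \<in> connected_rel f"
    using point_connected_line[of 0 0 0 f] point_connected_line[of 0 0 a f] by simp_all
  then have "(Inr (0, - f 0), Inr (a, - f (- a))) \<in> connected_rel f"
    by (blast intro: connected_rel_sym connected_rel_trans)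
  then have "(a, f 0 - f (- a)) \<in> base_component_lines f"
    by (simp add: lines_connected_iff)
  then show ?thesis by blast
qed

lemma quotient_card_two_nontrivial:
  assumes "equiv UNIV R" "card (UNIV // R) = 2"
  shows "\<exists>x y. (x, y) \<notin> R"
proof -
  obtain X Y where "UNIV // R = {X, Y}" "X \<noteq> Y"
    using assms(2) unfolding card_2_iff by blast
  then obtain x y where "X = R `` {x}" "Y = R `` {y}"
    by (metis insertI1 insert_commute quotientE)
  with \<open>X \<noteq> Y\<close> have "(x, y) \<notin> R" using equiv_class_eq_iff[OF assms(1)] by blast
  then show ?thesis by blast
qed

lemma quotient_card_two_third_class:
  assumes "equiv UNIV R" "card (UNIV // R) = 2" "(x, y) \<notin> R" "(y, z) \<notin> R"
  shows "(x, z) \<in> R"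
proof (rule ccontr)
  assume "(x, z) \<notin> R"
  with assms(3,4) have "card {R `` {x}, R `` {y}, R `` {z}} = 3"
    using equiv_class_eq_iff[OF assms(1)] by auto
  moreover have "{R `` {x}, R `` {y}, R `` {z}} \<subseteq> UNIV // R"
    by (auto intro: quotientI)
  then have "card {R `` {x}, R `` {y}, R `` {z}} \<le> card (UNIV // R)"
    using assms(2) by (intro card_mono) (auto intro: card_ge_0_finite)
  ultimately show False using assms(2) by simp
qed

lemma two_cosets_base_component_lines:
  assumes "splits_in_two f"
  shows "two_cosets (base_component_lines f)"
proof -
  let ?K = "base_component_lines f" and ?R = "connected_rel f"
  note equiv = equiv_connected_rel[of f] and two = assms[unfolded splits_in_two_def]
  obtain u v where "(u, v) \<notin> ?R" using quotient_card_two_nontrivial[OF equiv two] by blast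
  moreover obtain l m where "(u, Inr l) \<in> ?R" "(v, Inr m) \<in> ?R"
    using vertex_connected_line by metis
  ultimately have "(Inr l, Inr m) \<notin> ?R"
    by (blast intro: connected_rel_sym connected_rel_trans)
  then have "l \<notin> ?K \<or> m \<notin> ?K"
    unfolding base_component_lines_def by (blast intro: connected_rel_sym connected_rel_trans)
  moreover have "l - m \<in> ?K" if "l \<notin> ?K" "m \<notin> ?K" for l m
  proof -
    have "(Inr m, Inr 0) \<notin> ?R" "(Inr 0, Inr l) \<notin> ?R"
      using that connected_rel_sym unfolding base_component_lines_def by blast+
    then have "(Inr m, Inr l) \<in> ?R" by (rule quotient_card_two_third_class[OF equiv two])
    then show ?thesis by (simp add: lines_connected_iff)
  qed
  ultimately show ?thesis
    using subgroup_base_component_lines unfolding two_cosets_def by blast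
qed

theorem theorem4:
  fixes f :: "'g::{ab_group_add,finite} \<Rightarrow> 'h::{ab_group_add,finite}"
  assumes "CARD('g) = CARD('h)"
    and "even CARD('g)"
    and "semi_planar f"
    and "splits_in_two f"
  shows "\<exists>B::'h set. subgroup_add B \<and> index_two B \<and>
     ((\<forall>a b. line_in_S1 f a b \<longleftrightarrow> b \<in> B) \<or>
      (\<exists>A::'g set. subgroup_add A \<and> index_two A \<and>
         (\<forall>g h. g \<notin> A \<longrightarrow> h \<notin> B \<longrightarrow>
            (\<forall>a b. line_in_S1 f a b \<longleftrightarrow>
               ((a \<in> A \<and> b \<in> B) \<or> (a \<in> (\<lambda>x. x + g) ` A \<and> b \<in> (\<lambda>y. y + h) ` B))))))"
proof -
  have "two_cosets (base_component_lines f)"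
    using assms(4) by (rule two_cosets_base_component_lines)
  from two_cosets_product_cases[OF this base_component_lines_onto]
  show ?thesis by (simp only: line_in_S1_iff)
qed

end
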